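(* Under the hypotheses of Theorem 3, Theorem 4, or Theorem 5 below, the point $(\theta^*,\theta^* )$ is uniformly globally exponentially stable for the respective system, i.e., there exist $c,\alpha>0$ with $|x(t)-(\theta^*,\theta^* )|\le c|x_\circ-(\theta^*,\theta^* )|e^{-\alpha(t-t_\circ)}$ for all solutions and all $t\ge t_\circ$. The three settings are: with $\theta^*\in\mathbb{R}^n$, $\phi:\mathbb{R}_{\ge0}\to\mathbb{R}^n$ piecewise continuous and bounded, $y^*=\phi^T\theta^*$, samples $t_1,\dots,t_N$ with $[\phi(t_1),\dots,\phi(t_N)]$ of rank $n$, $\mathcal{N}_t=1+\mu\phi^T\phi$, $B(\theta,\mu)=\sum_k\frac{\phi(t_k)}{1+\mu|\phi(t_k)|^2}(\phi^T(t_k)\theta-y^*(t_k))$: (i) $\dot\theta=-\beta(\theta-\vartheta)\mathcal{N}_t$, $\dot\vartheta=-\gamma(\phi(\phi^T\theta-y^* )+\mathcal{N}_tB(\theta,\mu))$ with $\beta,\gamma,\mu>0$, $\beta\ge2\gamma/\mu$; (ii) $\dot\theta=-\beta(\theta-\vartheta)$, $\dot\vartheta=-\gamma(\mathcal{N}_t^{-1}\phi(\phi^T\theta-y^* )+B(\theta,\mu))$ with $\beta,\gamma,\mu>0$, $\beta\ge2\gamma/\mu$; (iii) $\dot\theta=-\beta(\theta-\vartheta)$, $\dot\vartheta=-\gamma B(\theta,\mu)$ with $\beta,\gamma>0$, $\mu\ge0$.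
   Context: $x=(\theta,\vartheta)\in\mathbb{R}^{2n}$, $|\cdot|$ the Euclidean norm. *)

theory Defs
  imports "HOL-Analysis.Analysis"
begin

definition piecewise_continuous_on_halfline :: "(real \<Rightarrow> 'a::topological_space) \<Rightarrow> bool" where
  "piecewise_continuous_on_halfline \<phi> \<longleftrightarrow>
     (\<forall>b\<ge>0. \<exists>S. finite S \<and>
        (\<forall>t\<in>{0..b} - S. continuous (at t within {0..}) \<phi>) \<and>
        (\<forall>s\<in>S. (s > 0 \<longrightarrow> (\<exists>l. (\<phi> \<longlongrightarrow> l) (at_left s))) \<and>
                 (\<exists>l. (\<phi> \<longlongrightarrow> l) (at_right s))))"

text \<open>Carath\'eodory solution on [t0,\<infinity>) of x' = f(t,x), x(t0) = x0 (integral form).\<close>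
definition is_solution ::
  "(real \<Rightarrow> 'a::euclidean_space \<Rightarrow> 'a) \<Rightarrow> real \<Rightarrow> 'a \<Rightarrow> (real \<Rightarrow> 'a) \<Rightarrow> bool" where
  "is_solution f t0 x0 x \<longleftrightarrow>
     x t0 = x0 \<and> (\<forall>t\<ge>t0. ((\<lambda>s. f s (x s)) has_integral (x t - x0)) {t0..t})"

definition UGES :: "(real \<Rightarrow> 'a::euclidean_space \<Rightarrow> 'a) \<Rightarrow> 'a \<Rightarrow> bool" where
  "UGES f xs \<longleftrightarrow>
     (\<exists>c>0. \<exists>\<alpha>>0. \<forall>t0 x0 x. t0 \<ge> 0 \<longrightarrow> is_solution f t0 x0 x \<longrightarrow>
        (\<forall>t\<ge>t0. norm (x t - xs) \<le> c * norm (x0 - xs) * exp (- \<alpha> * (t - t0))))"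

definition Nrm :: "(real \<Rightarrow> real^'n) \<Rightarrow> real \<Rightarrow> real \<Rightarrow> real" where
  "Nrm \<phi> \<mu> t = 1 + \<mu> * (\<phi> t \<bullet> \<phi> t)"

text \<open>B(theta,mu) = sum_k phi(t_k)/(1+mu|phi(t_k)|^2) (phi(t_k)^T theta - y*(t_k)), y* = phi^T theta*.\<close>
definition Bterm :: "(real \<Rightarrow> real^'n) \<Rightarrow> real^'n \<Rightarrow> nat \<Rightarrow> (nat \<Rightarrow> real) \<Rightarrow> real \<Rightarrow> real^'n \<Rightarrow> real^'n" where
  "Bterm \<phi> \<theta>s N ts \<mu> \<theta> =
     (\<Sum>k<N. (1 / (1 + \<mu> * (norm (\<phi> (ts k)))\<^sup>2)) *\<^sub>R
              ((\<phi> (ts k) \<bullet> \<theta> - \<phi> (ts k) \<bullet> \<theta>s) *\<^sub>R \<phi> (ts k)))"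

definition sys1 :: "(real \<Rightarrow> real^'n) \<Rightarrow> real^'n \<Rightarrow> nat \<Rightarrow> (nat \<Rightarrow> real) \<Rightarrow> real \<Rightarrow> real \<Rightarrow> real
     \<Rightarrow> real \<Rightarrow> ((real^'n) \<times> (real^'n)) \<Rightarrow> ((real^'n) \<times> (real^'n))" where
  "sys1 \<phi> \<theta>s N ts \<beta> \<gamma> \<mu> t x =
     (let \<theta> = fst x; \<theta>' = snd x in
      ((- \<beta> * Nrm \<phi> \<mu> t) *\<^sub>R (\<theta> - \<theta>'),
       (- \<gamma>) *\<^sub>R ((\<phi> t \<bullet> \<theta> - \<phi> t \<bullet> \<theta>s) *\<^sub>R \<phi> t + Nrm \<phi> \<mu> t *\<^sub>R Bterm \<phi> \<theta>s N ts \<mu> \<theta>)))"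

definition sys2 :: "(real \<Rightarrow> real^'n) \<Rightarrow> real^'n \<Rightarrow> nat \<Rightarrow> (nat \<Rightarrow> real) \<Rightarrow> real \<Rightarrow> real \<Rightarrow> real
     \<Rightarrow> real \<Rightarrow> ((real^'n) \<times> (real^'n)) \<Rightarrow> ((real^'n) \<times> (real^'n))" where
  "sys2 \<phi> \<theta>s N ts \<beta> \<gamma> \<mu> t x =
     (let \<theta> = fst x; \<theta>' = snd x in
      ((- \<beta>) *\<^sub>R (\<theta> - \<theta>'),
       (- \<gamma>) *\<^sub>R ((inverse (Nrm \<phi> \<mu> t) * (\<phi> t \<bullet> \<theta> - \<phi> t \<bullet> \<theta>s)) *\<^sub>R \<phi> t
                   + Bterm \<phi> \<theta>s N ts \<mu> \<theta>)))"

definition sys3 :: "(real \<Rightarrow> real^'n) \<Rightarrow> real^'n \<Rightarrow> nat \<Rightarrow> (nat \<Rightarrow> real) \<Rightarrow> real \<Rightarrow> real \<Rightarrow> real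
     \<Rightarrow> real \<Rightarrow> ((real^'n) \<times> (real^'n)) \<Rightarrow> ((real^'n) \<times> (real^'n))" where
  "sys3 \<phi> \<theta>s N ts \<beta> \<gamma> \<mu> t x =
     (let \<theta> = fst x; \<theta>' = snd x in
      ((- \<beta>) *\<^sub>R (\<theta> - \<theta>'), (- \<gamma>) *\<^sub>R Bterm \<phi> \<theta>s N ts \<mu> \<theta>))"

end

theory Submission
  imports Defs
begin

(* In the error coordinates e = theta - theta*, f = vartheta - theta* all three systems read
     e' = beta (f - e),   f' = - gamma (G e + w),
   system (i) up to the time rescaling by N_t >= 1.  Here G is the Gram operator of the sampled
   regressors phi(t_k) with weights 1/(1 + mu |phi(t_k)|^2), positive definite by the rank
   condition, and w = N_t^-1 phi (phi^T e) for (i), (ii) and w = 0 for (iii).  Along such a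
   field the quadratic form
     V(e, f) = beta |f - e/2|^2 + beta/4 |e|^2 + gamma e^T G e
   satisfies V' <= - beta^2/2 |f - e|^2 - beta gamma e^T G e: the contribution of w is absorbed
   by Cauchy-Schwarz, and this is where beta >= 2 gamma / mu is needed.  V is comparable to
   |e|^2 + |f|^2 and the dissipation dominates a multiple of V, so V decays exponentially along
   every Caratheodory solution. *)

section \<open>Exponential stability from a quadratic Lyapunov function\<close>

lemma is_solution_integral:
  assumes "is_solution F t0 x0 x" and "t0 \<le> t"
  shows "integral {t0..t} (\<lambda>s. F s (x s)) = x t - x0"
  using assms integral_unique unfolding is_solution_def by blast

lemma is_solution_integrable:
  assumes "is_solution F t0 x0 x" and "t0 \<le> t"
  shows "(\<lambda>s. F s (x s)) integrable_on {t0..t}"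
  using assms unfolding is_solution_def by blast

lemma is_solution_continuous_on:
  assumes sol: "is_solution F t0 x0 x"
  shows "continuous_on {t0..T} x"
proof (cases "t0 \<le> T")
  case True
  have "continuous_on {t0..T} (\<lambda>t. x0 + integral {t0..t} (\<lambda>s. F s (x s)))"
    by (intro continuous_intros indefinite_integral_continuous_1 is_solution_integrable[OF sol True])
  then show ?thesis
    by (rule continuous_on_eq) (simp add: is_solution_integral[OF sol])
qed simp

lemma is_solution_has_vector_derivative:
  assumes sol: "is_solution F t0 x0 x" and t: "t0 < t"
    and cont: "continuous (at t) (\<lambda>s. F s (x s))"
  shows "(x has_vector_derivative F t (x t)) (at t)"
proof -
  have int: "t \<in> interior {t0..t+1}" and tin: "t \<in> {t0..t+1} - {}" using t by auto
  have "continuous (at t within ({t0..t+1} - {})) (\<lambda>s. F s (x s))"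
    using cont continuous_at_imp_continuous_at_within by blast
  then have "((\<lambda>u. integral {t0..u} (\<lambda>s. F s (x s))) has_vector_derivative F t (x t))
      (at t within {t0..t+1})"
    using integral_has_vector_derivative_continuous_at[OF is_solution_integrable[OF sol] tin]
    using t by simp
  then have "((\<lambda>u. x0 + integral {t0..u} (\<lambda>s. F s (x s))) has_vector_derivative F t (x t))
      (at t within {t0..t+1})"
    by (auto intro!: derivative_eq_intros)
  then have "(x has_vector_derivative F t (x t)) (at t within {t0..t+1})"
    by (rule has_vector_derivative_transform[rotated 2]) (use t is_solution_integral[OF sol] in auto)
  then show ?thesis unfolding at_within_interior[OF int] .
qed

lemma exponential_decay_along_curve:
  fixes x :: "real \<Rightarrow> 'a::real_normed_vector"
  assumes S: "finite S" and T: "t0 \<le> T" and x: "continuous_on {t0..T} x"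
    and x': "\<And>t. t \<in> {t0<..<T} - S \<Longrightarrow> (x has_vector_derivative x' t) (at t)"
    and V: "\<And>z. (V has_derivative DV z) (at z)"
    and decay: "\<And>t. t \<in> {t0..T} \<Longrightarrow> DV (x t) (x' t) \<le> - c * V (x t)"
  shows "V (x T) \<le> V (x t0) * exp (- c * (T - t0))"
proof -
  define h where "h t = V (x t) * exp (c * (t - t0))" for t
  define h' where
    "h' t = DV (x t) (x' t) * exp (c * (t - t0)) + V (x t) * (c * exp (c * (t - t0)))" for t
  have "(h has_vector_derivative h' t) (at t)" if t: "t \<in> {t0<..<T} - S" for t
  proof -
    have "((\<lambda>s. V (x s)) has_derivative (\<lambda>u. DV (x t) (u *\<^sub>R x' t))) (at t)"
      using has_derivative_compose[OF x'[OF t, unfolded has_vector_derivative_def] V] by (simp add: o_def)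
    moreover have "(\<lambda>u. DV (x t) (u *\<^sub>R x' t)) = (*) (DV (x t) (x' t))"
      using linear_cmul[OF has_derivative_linear[OF V]] by (auto simp: mult.commute)
    ultimately have "((\<lambda>s. V (x s)) has_real_derivative DV (x t) (x' t)) (at t)"
      by (simp add: has_field_derivative_def)
    then show ?thesis
      unfolding h_def h'_def has_real_derivative_iff_has_vector_derivative[symmetric]
      by (auto intro!: derivative_eq_intros)
  qed
  moreover have "continuous_on {t0..T} h"
  proof -
    have "continuous_on UNIV V"
      by (simp add: continuous_at_imp_continuous_on has_derivative_continuous[OF V])
    then have "continuous_on {t0..T} (\<lambda>t. V (x t))"
      by (rule continuous_on_compose2[OF _ x]) simp
    then show ?thesis
      unfolding h_def by (intro continuous_intros)
  qed
  ultimately have h'_int: "(h' has_integral (h T - h t0)) {t0..T}"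
    by (rule fundamental_theorem_of_calculus_interior_strong[OF S T])
  have "h' t \<le> 0" if "t \<in> {t0..T}" for t
  proof -
    have "h' t = exp (c * (t - t0)) * (DV (x t) (x' t) + c * V (x t))"
      unfolding h'_def by (simp add: algebra_simps)
    then show ?thesis using decay[OF that] by (simp add: mult_nonneg_nonpos)
  qed
  then have "h T - h t0 \<le> 0"
    using has_integral_le[OF h'_int has_integral_0] by auto
  then have hT: "V (x T) * exp (c * (T - t0)) \<le> V (x t0)"
    unfolding h_def by simp
  have "V (x T) = V (x T) * exp (c * (T - t0)) * exp (- c * (T - t0))"
    by (simp add: mult.assoc flip: exp_add)
  also have "\<dots> \<le> V (x t0) * exp (- c * (T - t0))"
    by (rule mult_right_mono[OF hT]) simp
  finally show ?thesis .
qed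

definition piecewise_continuous_in_time ::
    "(real \<Rightarrow> 'a::topological_space \<Rightarrow> 'b::topological_space) \<Rightarrow> bool" where
  "piecewise_continuous_in_time F \<longleftrightarrow>
     (\<forall>b\<ge>0. \<exists>S. finite S \<and> (\<forall>t\<in>{0..b} - S. \<forall>y. continuous (at t within {0..}) y \<longrightarrow>
        continuous (at t within {0..}) (\<lambda>s. F s (y s))))"

lemma Lyapunov_decay_along_solution:
  fixes F :: "real \<Rightarrow> 'a::euclidean_space \<Rightarrow> 'a"
  assumes F: "piecewise_continuous_in_time F"
    and V: "\<And>z. (V has_derivative DV z) (at z)"
    and decay: "\<And>s z. s \<ge> 0 \<Longrightarrow> DV z (F s z) \<le> - c * V z"
    and sol: "is_solution F t0 x0 x" and t0: "0 \<le> t0" and T: "t0 \<le> T"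
  shows "V (x T) \<le> V x0 * exp (- c * (T - t0))"
proof -
  obtain S where S: "finite S"
    and FS: "\<And>t y. t \<in> {0..T} - S \<Longrightarrow> continuous (at t within {0..}) y \<Longrightarrow>
                continuous (at t within {0..}) (\<lambda>s. F s (y s))"
    using F t0 T unfolding piecewise_continuous_in_time_def by (meson order_trans)
  have x: "continuous_on {t0..T} x" by (rule is_solution_continuous_on[OF sol])
  have "(x has_vector_derivative F t (x t)) (at t)" if t: "t \<in> {t0<..<T} - S" for t
  proof -
    have t_int: "t \<in> interior {t0..T}" using t by simp
    have "isCont x t"
      by (rule continuous_on_interior[OF x t_int])
    then have "continuous (at t within {0..}) x"
      by (rule continuous_at_imp_continuous_at_within)
    then have "continuous (at t within {0..}) (\<lambda>s. F s (x s))"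
      by (rule FS[rotated]) (use t t0 in auto)
    moreover have "at t within {0..} = at t"
      by (rule at_within_interior) (use t t0 in simp)
    ultimately have "isCont (\<lambda>s. F s (x s)) t" by simp
    then show ?thesis
      by (rule is_solution_has_vector_derivative[OF sol, rotated]) (use t in simp)
  qed
  moreover have "DV (x t) (F t (x t)) \<le> - c * V (x t)" if "t \<in> {t0..T}" for t
    using decay that t0 by simp
  ultimately have "V (x T) \<le> V (x t0) * exp (- c * (T - t0))"
    by (rule exponential_decay_along_curve[OF S T x _ V])
  then show ?thesis using sol unfolding is_solution_def by simp
qed

lemma UGES_quadratic_Lyapunov:
  fixes F :: "real \<Rightarrow> 'a::euclidean_space \<Rightarrow> 'a"
  assumes F: "piecewise_continuous_in_time F"
    and V: "\<And>z. (V has_derivative DV z) (at z)"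
    and decay: "\<And>s z. s \<ge> 0 \<Longrightarrow> DV z (F s z) \<le> - c * V z"
    and c: "c > 0" and m: "m > 0"
    and lower: "\<And>z. m * (norm (z - xs))\<^sup>2 \<le> V z"
    and upper: "\<And>z. V z \<le> K * (norm (z - xs))\<^sup>2"
  shows "UGES F xs"
proof -
  have K: "K > 0"
  proof -
    obtain b :: 'a where "b \<in> Basis" using nonempty_Basis by blast
    then have "0 < (norm b)\<^sup>2" by simp
    moreover have "m * (norm b)\<^sup>2 \<le> K * (norm b)\<^sup>2"
      using lower[of "b + xs"] upper[of "b + xs"] by simp
    ultimately show ?thesis using m
      by (metis mult_le_cancel_right order_less_le_trans order_less_not_sym)
  qed
  have bound: "norm (x T - xs) \<le> sqrt (K / m) * norm (x0 - xs) * exp (- (c / 2) * (T - t0))"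
    if "0 \<le> t0" "is_solution F t0 x0 x" "t0 \<le> T" for t0 x0 x T
  proof (rule power2_le_imp_le)
    have "m * (norm (x T - xs))\<^sup>2 \<le> V x0 * exp (- c * (T - t0))"
      using lower[of "x T"] Lyapunov_decay_along_solution[OF F V decay that(2,1,3)] by simp
    also have "\<dots> \<le> K * (norm (x0 - xs))\<^sup>2 * exp (- c * (T - t0))"
      using upper[of x0] by simp
    also have "\<dots> = m * (sqrt (K / m) * norm (x0 - xs) * exp (- (c / 2) * (T - t0)))\<^sup>2"
    proof -
      have "(exp (- (c / 2) * (T - t0)))\<^sup>2 = exp (- c * (T - t0))"
        by (simp add: power2_eq_square flip: exp_add)
      then show ?thesis using K m by (simp add: power_mult_distrib)
    qed
    finally show "(norm (x T - xs))\<^sup>2 \<le> (sqrt (K / m) * norm (x0 - xs) * exp (- (c / 2) * (T - t0)))\<^sup>2"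
      using m by simp
  qed (use K m in simp)
  show ?thesis
    unfolding UGES_def
    by (intro exI[of _ "sqrt (K / m)"] exI[of _ "c / 2"] conjI allI impI bound)
      (use K m c in simp_all)
qed

section \<open>The Lyapunov function of the gradient-type error dynamics\<close>

lemma power2_norm_add_le:
  fixes a b :: "'a::real_inner"
  shows "(norm (a + b))\<^sup>2 \<le> 2 * (norm a)\<^sup>2 + 2 * (norm b)\<^sup>2"
proof -
  have "0 \<le> (a - b) \<bullet> (a - b)" by simp
  then show ?thesis
    by (simp add: power2_norm_eq_inner algebra_simps inner_commute[of b a])
qed

lemma power2_norm_diff_scaleR:
  fixes e f :: "'a::real_inner"
  shows "(norm (f - a *\<^sub>R e))\<^sup>2 = (norm f)\<^sup>2 - 2 * a * (e \<bullet> f) + a\<^sup>2 * (norm e)\<^sup>2"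
  unfolding power2_norm_eq_inner
  by (simp add: inner_diff inner_commute[of f e] power2_eq_square algebra_simps)

lemma power2_norm_diff_half_le:
  fixes e f :: "'a::real_inner"
  shows "(norm (f - (1/2) *\<^sub>R e))\<^sup>2 \<le> 2 * (norm (f - e))\<^sup>2 + (norm e)\<^sup>2 / 2"
proof -
  define E F p S U W where "E = (norm e)\<^sup>2" and "F = (norm f)\<^sup>2" and "p = e \<bullet> f"
    and "S = (norm (f - (1/2) *\<^sub>R e))\<^sup>2" and "U = (norm (f - 1 *\<^sub>R e))\<^sup>2"
    and "W = (norm (f - (3/2) *\<^sub>R e))\<^sup>2"
  have "S = F - p + E/4" and "U = F - 2*p + E" and "W = F - 3*p + 9/4*E"
    unfolding S_def U_def W_def E_def F_def p_def power2_norm_diff_scaleR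
    by (simp_all add: power2_eq_square)
  moreover have "0 \<le> W" unfolding W_def by simp
  ultimately have "S \<le> 2 * U + E / 2" by (simp add: field_simps)
  then show ?thesis unfolding S_def U_def E_def by simp
qed

lemma power2_norm_prod: "(norm z)\<^sup>2 = (norm (fst z))\<^sup>2 + (norm (snd z))\<^sup>2"
  by (simp add: norm_prod_def)

definition lyapunov :: "real \<Rightarrow> real \<Rightarrow> ('a::real_inner \<Rightarrow> 'a) \<Rightarrow> 'a \<times> 'a \<Rightarrow> real" where
  "lyapunov \<beta> \<gamma> A z =
     \<beta> * (norm (snd z - (1/2) *\<^sub>R fst z))\<^sup>2 + \<beta>/4 * (norm (fst z))\<^sup>2 + \<gamma> * (A (fst z) \<bullet> fst z)"

definition lyapunov_deriv :: "real \<Rightarrow> real \<Rightarrow> ('a::real_inner \<Rightarrow> 'a) \<Rightarrow> 'a \<times> 'a \<Rightarrow> 'a \<times> 'a \<Rightarrow> real" where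
  "lyapunov_deriv \<beta> \<gamma> A z h =
     2 * \<beta> * ((snd z - (1/2) *\<^sub>R fst z) \<bullet> (snd h - (1/2) *\<^sub>R fst h))
     + \<beta>/2 * (fst z \<bullet> fst h) + \<gamma> * (A (fst h) \<bullet> fst z + A (fst z) \<bullet> fst h)"

definition dissipation :: "real \<Rightarrow> real \<Rightarrow> ('a::real_inner \<Rightarrow> 'a) \<Rightarrow> 'a \<times> 'a \<Rightarrow> real" where
  "dissipation \<beta> \<gamma> A z = \<beta>\<^sup>2/2 * (norm (snd z - fst z))\<^sup>2 + \<beta> * \<gamma> * (A (fst z) \<bullet> fst z)"

lemma has_derivative_lyapunov:
  assumes "bounded_linear A"
  shows "(lyapunov \<beta> \<gamma> A has_derivative lyapunov_deriv \<beta> \<gamma> A z) (at z)"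
  unfolding lyapunov_def[abs_def] lyapunov_deriv_def[abs_def] power2_norm_eq_inner
  by (auto intro!: derivative_eq_intros bounded_linear.has_derivative[OF assms] ext
      simp: inner_commute algebra_simps)

lemma lyapunov_deriv_scaleR:
  assumes "linear A"
  shows "lyapunov_deriv \<beta> \<gamma> A z (r *\<^sub>R h) = r * lyapunov_deriv \<beta> \<gamma> A z h"
  using assms by (simp add: lyapunov_deriv_def linear_cmul algebra_simps flip: scaleR_diff_right)

lemma lyapunov_deriv_gradient_field:
  assumes A: "linear A" and sym: "\<And>u v. A u \<bullet> v = u \<bullet> A v"
  shows "lyapunov_deriv \<beta> \<gamma> A (e, f) (\<beta> *\<^sub>R (f - e), - \<gamma> *\<^sub>R (A e + w))
     = - \<beta>\<^sup>2 * (norm (f - e))\<^sup>2 - \<beta> * \<gamma> * (A e \<bullet> e) - \<beta> * \<gamma> * ((2 *\<^sub>R f - e) \<bullet> w)"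
  unfolding lyapunov_deriv_def power2_norm_eq_inner
  by (simp add: power2_eq_square inner_diff_left inner_add
      inner_commute[of f e] inner_commute[of _ "A e"] sym[of f e] linear_diff[OF A] linear_cmul[OF A]
      algebra_simps)

lemma lyapunov_lower_bound:
  assumes "0 \<le> \<beta>" "0 \<le> \<gamma>" "0 \<le> A (fst z) \<bullet> fst z"
  shows "\<beta>/6 * (norm z)\<^sup>2 \<le> lyapunov \<beta> \<gamma> A z"
proof -
  obtain e f where z: "z = (e, f)" by fastforce
  define E F p S T where "E = (norm e)\<^sup>2" and "F = (norm f)\<^sup>2" and "p = e \<bullet> f"
    and "S = (norm (f - (1/2) *\<^sub>R e))\<^sup>2" and "T = (norm (f - (3/5) *\<^sub>R e))\<^sup>2"
  have "S = F - p + E/4" and "T = F - 6/5 * p + 9/25 * E"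
    unfolding S_def T_def E_def F_def p_def power2_norm_diff_scaleR by (simp_all add: power2_eq_square)
  moreover have "0 \<le> T" "0 \<le> E" unfolding T_def E_def by simp_all
  ultimately have "(E + F)/6 \<le> S + E/4" by (simp add: field_simps)
  then have "\<beta>/6 * (E + F) \<le> \<beta> * S + \<beta>/4 * E"
    using mult_left_mono[OF _ \<open>0 \<le> \<beta>\<close>] by (fastforce simp: algebra_simps)
  moreover have "0 \<le> \<gamma> * (A e \<bullet> e)" using assms z by simp
  ultimately show ?thesis
    unfolding lyapunov_def z power2_norm_prod E_def F_def S_def by simp
qed

lemma lyapunov_upper_bound:
  assumes "0 \<le> \<beta>" "0 \<le> \<gamma>" "0 \<le> a" "A (fst z) \<bullet> fst z \<le> a * (norm (fst z))\<^sup>2"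
  shows "lyapunov \<beta> \<gamma> A z \<le> (2*\<beta> + \<gamma>*a) * (norm z)\<^sup>2"
proof -
  obtain e f where z: "z = (e, f)" by fastforce
  have "(norm (f - (1/2) *\<^sub>R e))\<^sup>2 \<le> 2 * (norm f)\<^sup>2 + (norm e)\<^sup>2 / 2"
    using power2_norm_add_le[of f "- (1/2) *\<^sub>R e"] by (simp add: power2_eq_square)
  then have "\<beta> * (norm (f - (1/2) *\<^sub>R e))\<^sup>2 \<le> \<beta> * (2 * (norm f)\<^sup>2 + (norm e)\<^sup>2 / 2)"
    by (rule mult_left_mono) (rule assms)
  moreover have "\<gamma> * (A e \<bullet> e) \<le> \<gamma> * (a * (norm e)\<^sup>2)"
    using assms z by (simp add: mult_left_mono)
  moreover have "0 \<le> \<gamma> * a * (norm f)\<^sup>2" "0 \<le> \<beta> * (norm e)\<^sup>2"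
    using assms by simp_all
  ultimately show ?thesis
    unfolding lyapunov_def z power2_norm_prod by (simp add: algebra_simps)
qed

lemma lyapunov_le_error_norms:
  assumes "0 \<le> \<beta>"
  shows "lyapunov \<beta> \<gamma> A (e, f) \<le> 2*\<beta>*(norm (f - e))\<^sup>2 + 3*\<beta>/4*(norm e)\<^sup>2 + \<gamma>*(A e \<bullet> e)"
proof -
  define u2 e2 S where "u2 = (norm (f - e))\<^sup>2" and "e2 = (norm e)\<^sup>2"
    and "S = (norm (f - (1/2) *\<^sub>R e))\<^sup>2"
  have "S \<le> 2 * u2 + e2 / 2"
    unfolding S_def u2_def e2_def by (rule power2_norm_diff_half_le)
  then have "\<beta> * S \<le> \<beta> * (2 * u2 + e2 / 2)"
    using assms by (rule mult_left_mono)
  moreover have "lyapunov \<beta> \<gamma> A (e, f) = \<beta> * S + \<beta>/4 * e2 + \<gamma> * (A e \<bullet> e)"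
    unfolding lyapunov_def S_def e2_def by simp
  ultimately show ?thesis
    unfolding u2_def[symmetric] e2_def[symmetric] by (simp add: algebra_simps)
qed

lemma lyapunov_le_dissipation:
  assumes \<beta>: "0 < \<beta>" and \<gamma>: "0 < \<gamma>" and a: "0 < a"
    and coercive: "a * (norm (fst z))\<^sup>2 \<le> A (fst z) \<bullet> fst z"
  shows "min (\<beta>/4) (2*\<gamma>*a/3) * lyapunov \<beta> \<gamma> A z \<le> dissipation \<beta> \<gamma> A z"
proof -
  obtain e f where z: "z = (e, f)" by fastforce
  define c where "c = min (\<beta>/4) (2*\<gamma>*a/3)"
  define u2 e2 q where "u2 = (norm (f - e))\<^sup>2" and "e2 = (norm e)\<^sup>2" and "q = A e \<bullet> e"
  have "q \<ge> a * e2" using coercive unfolding z q_def e2_def by simp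
  then have "q \<ge> 0" "e2 \<ge> 0" using a unfolding e2_def by (simp_all add: order_trans[rotated])
  have c: "0 \<le> c" "c \<le> \<beta>/4" "c \<le> 2*\<gamma>*a/3"
    using \<beta> \<gamma> a by (simp_all add: c_def)
  define K where "K = \<beta> * \<gamma> * q"
  have "c * lyapunov \<beta> \<gamma> A z \<le> c * (2*\<beta>*u2 + 3*\<beta>/4*e2 + \<gamma>*q)"
    unfolding z u2_def e2_def q_def
    by (intro mult_left_mono lyapunov_le_error_norms) (use \<beta> c in simp_all)
  also have "\<dots> = c*(2*\<beta>*u2) + c*(3*\<beta>/4*e2) + c*(\<gamma>*q)"
    by (simp add: distrib_left)
  also have "\<dots> \<le> \<beta>\<^sup>2/2*u2 + K/2 + K/4"
  proof (intro add_mono)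
    have "c*(2*\<beta>*u2) \<le> \<beta>/4*(2*\<beta>*u2)"
      using c \<beta> by (intro mult_right_mono) (simp_all add: u2_def)
    then show "c*(2*\<beta>*u2) \<le> \<beta>\<^sup>2/2*u2" by (simp add: power2_eq_square)
    have "c*(3*\<beta>/4*e2) \<le> 2*\<gamma>*a/3*(3*\<beta>/4*e2)"
      using c \<beta> \<open>e2 \<ge> 0\<close> by (intro mult_right_mono) simp_all
    also have "\<dots> = \<beta>*\<gamma>/2*(a*e2)" by simp
    also have "\<dots> \<le> \<beta>*\<gamma>/2*q"
      using \<open>q \<ge> a * e2\<close> \<beta> \<gamma> by (intro mult_left_mono) simp_all
    finally show "c*(3*\<beta>/4*e2) \<le> K/2" by (simp add: K_def)
    have "c*(\<gamma>*q) \<le> \<beta>/4*(\<gamma>*q)"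
      using c \<gamma> \<open>q \<ge> 0\<close> by (intro mult_right_mono) simp_all
    then show "c*(\<gamma>*q) \<le> K/4" by (simp add: K_def)
  qed
  also have "\<dots> \<le> dissipation \<beta> \<gamma> A z"
    using \<beta> \<gamma> \<open>q \<ge> 0\<close> unfolding dissipation_def z K_def u2_def q_def by simp
  finally show ?thesis unfolding c_def .
qed

lemma lyapunov_deriv_gradient_field_le:
  assumes A: "linear A" "\<And>u v. A u \<bullet> v = u \<bullet> A v"
    and cross: "- \<beta> * \<gamma> * ((2 *\<^sub>R f - e) \<bullet> w) \<le> \<beta>\<^sup>2/2 * (norm (f - e))\<^sup>2"
  shows "lyapunov_deriv \<beta> \<gamma> A (e, f) (\<beta> *\<^sub>R (f - e), - \<gamma> *\<^sub>R (A e + w))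
           \<le> - dissipation \<beta> \<gamma> A (e, f)"
proof -
  have "0 \<le> \<beta>\<^sup>2/2 * (norm (f - e))\<^sup>2" by simp
  then show ?thesis
    using cross unfolding lyapunov_deriv_gradient_field[OF A] dissipation_def by simp
qed

lemma dissipation_nonneg:
  assumes "0 \<le> \<beta>" "0 \<le> \<gamma>" "0 \<le> A (fst z) \<bullet> fst z"
  shows "0 \<le> dissipation \<beta> \<gamma> A z"
  using assms by (simp add: dissipation_def)

lemma rank_one_cross_term_le:
  fixes e f p :: "'a::real_inner"
  assumes \<beta>: "0 \<le> \<beta>" and \<gamma>: "0 \<le> \<gamma>" and n: "0 < n" and small: "2 * \<gamma> * (norm p)\<^sup>2 \<le> \<beta> * n"
  shows "- \<beta> * \<gamma> * ((2 *\<^sub>R f - e) \<bullet> ((p \<bullet> e / n) *\<^sub>R p)) \<le> \<beta>\<^sup>2/2 * (norm (f - e))\<^sup>2"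
proof -
  define a b where "a = p \<bullet> e" and "b = p \<bullet> f"
  have "- (2*a*b - a\<^sup>2) \<le> (b - a)\<^sup>2"
    by (simp add: power2_eq_square algebra_simps)
  also have "\<dots> = (p \<bullet> (f - e))\<^sup>2" by (simp add: a_def b_def inner_diff_right)
  also have "\<dots> \<le> (norm p)\<^sup>2 * (norm (f - e))\<^sup>2"
    using Cauchy_Schwarz_ineq[of p "f - e"] by (simp add: power2_norm_eq_inner)
  finally have cs: "- (2*a*b - a\<^sup>2) \<le> (norm p)\<^sup>2 * (norm (f - e))\<^sup>2" .
  have "- \<beta> * \<gamma> * ((2 *\<^sub>R f - e) \<bullet> ((p \<bullet> e / n) *\<^sub>R p)) = \<beta> * \<gamma> * (- (2*a*b - a\<^sup>2)) / n"
    using n by (simp add: a_def b_def inner_diff_left inner_diff_right inner_commute[of _ p]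
        power2_eq_square field_simps)
  also have "\<dots> \<le> \<beta> * (\<gamma> * (norm p)\<^sup>2) * (norm (f - e))\<^sup>2 / n"
    using mult_left_mono[OF cs, of "\<beta> * \<gamma>"] \<beta> \<gamma> n by (simp add: divide_right_mono mult.assoc)
  also have "\<dots> \<le> \<beta> * (\<beta> * n / 2) * (norm (f - e))\<^sup>2 / n"
    using small \<beta> n by (intro divide_right_mono mult_right_mono mult_left_mono) simp_all
  also have "\<dots> = \<beta>\<^sup>2/2 * (norm (f - e))\<^sup>2"
    using n by (simp add: power2_eq_square)
  finally show ?thesis .
qed

lemma linear_pos_def_coercive:
  fixes A :: "'a::euclidean_space \<Rightarrow> 'a"
  assumes A: "linear A" and pos: "\<And>e. e \<noteq> 0 \<Longrightarrow> 0 < A e \<bullet> e"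
  shows "\<exists>a>0. \<forall>e. a * (norm e)\<^sup>2 \<le> A e \<bullet> e"
proof -
  have "bounded_linear A" using A by (simp add: linear_conv_bounded_linear)
  then have "continuous_on (sphere 0 1) A" by (rule linear_continuous_on)
  then have "continuous_on (sphere 0 1) (\<lambda>e. A e \<bullet> e)"
    by (rule continuous_on_inner) (rule continuous_on_id)
  moreover have "sphere (0::'a) 1 \<noteq> {}" by simp
  ultimately obtain e0 where e0: "e0 \<in> sphere (0::'a) 1"
    and min: "\<And>u. u \<in> sphere 0 1 \<Longrightarrow> A e0 \<bullet> e0 \<le> A u \<bullet> u"
    using continuous_attains_inf[OF compact_sphere] by blast
  have "a * (norm e)\<^sup>2 \<le> A e \<bullet> e" if "a = A e0 \<bullet> e0" for a e
  proof (cases "e = 0")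
    case False
    define u where "u = e /\<^sub>R norm e"
    have "A e \<bullet> e = (norm e)\<^sup>2 * (A u \<bullet> u)"
      using False by (simp add: u_def linear_cmul[OF A] power2_eq_square field_simps)
    moreover have "a \<le> A u \<bullet> u"
      unfolding that using False by (intro min) (simp add: u_def)
    ultimately show ?thesis
      using mult_right_mono[OF \<open>a \<le> A u \<bullet> u\<close> zero_le_power2[of "norm e"]] by (simp add: mult.commute)
  qed (simp add: linear_0[OF A])
  moreover have "0 < A e0 \<bullet> e0" using e0 by (intro pos) auto
  ultimately show ?thesis by blast
qed

theorem UGES_of_dissipation:
  fixes F :: "real \<Rightarrow> 'a::euclidean_space \<times> 'a \<Rightarrow> 'a \<times> 'a" and A :: "'a \<Rightarrow> 'a"
  assumes F: "piecewise_continuous_in_time F"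
    and A: "bounded_linear A" and pos: "\<And>e. e \<noteq> 0 \<Longrightarrow> 0 < A e \<bullet> e"
    and \<beta>: "0 < \<beta>" and \<gamma>: "0 < \<gamma>"
    and dissipative: "\<And>s z. 0 \<le> s \<Longrightarrow>
       lyapunov_deriv \<beta> \<gamma> A (z - xs) (F s z) \<le> - dissipation \<beta> \<gamma> A (z - xs)"
  shows "UGES F xs"
proof -
  obtain a where a: "0 < a" and coercive: "\<And>e. a * (norm e)\<^sup>2 \<le> A e \<bullet> e"
    using linear_pos_def_coercive[OF bounded_linear.linear[OF A] pos] by blast
  obtain K where K: "\<And>e. norm (A e) \<le> norm e * K" and "0 < K"
    using bounded_linear.pos_bounded[OF A] by blast
  have bounded: "A e \<bullet> e \<le> K * (norm e)\<^sup>2" for e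
    using norm_cauchy_schwarz[of "A e" e] mult_right_mono[OF K[of e] norm_ge_zero[of e]]
    by (simp add: power2_eq_square algebra_simps)
  have "(lyapunov \<beta> \<gamma> A \<circ> (\<lambda>z. z - xs) has_derivative lyapunov_deriv \<beta> \<gamma> A (z - xs) \<circ> (\<lambda>h. h))
      (at z)" for z
    by (intro diff_chain_at has_derivative_lyapunov[OF A] derivative_eq_intros) auto
  then have V: "((\<lambda>z. lyapunov \<beta> \<gamma> A (z - xs)) has_derivative lyapunov_deriv \<beta> \<gamma> A (z - xs)) (at z)"
    for z by (simp add: o_def)
  show ?thesis
  proof (rule UGES_quadratic_Lyapunov[OF F V])
    fix s :: real and z assume "0 \<le> s"
    then show "lyapunov_deriv \<beta> \<gamma> A (z - xs) (F s z) \<le> - min (\<beta>/4) (2*\<gamma>*a/3) * lyapunov \<beta> \<gamma> A (z - xs)"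
      using dissipative[OF \<open>0 \<le> s\<close>, of z]
        lyapunov_le_dissipation[where A = A and z = "z - xs", OF \<beta> \<gamma> a coercive] by simp
  next
    fix z
    show "\<beta>/6 * (norm (z - xs))\<^sup>2 \<le> lyapunov \<beta> \<gamma> A (z - xs)"
      using \<beta> \<gamma> a coercive[of "fst (z - xs)"]
      by (intro lyapunov_lower_bound) (simp_all add: order_trans[OF _ coercive])
    show "lyapunov \<beta> \<gamma> A (z - xs) \<le> (2*\<beta> + \<gamma>*K) * (norm (z - xs))\<^sup>2"
      using \<beta> \<gamma> \<open>0 < K\<close> bounded by (intro lyapunov_upper_bound) simp_all
  qed (use \<beta> \<gamma> a in simp_all)
qed

section \<open>Weighted Gram operators\<close>

definition weighted_gram :: "nat \<Rightarrow> (nat \<Rightarrow> real) \<Rightarrow> (nat \<Rightarrow> 'a::real_inner) \<Rightarrow> 'a \<Rightarrow> 'a" where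
  "weighted_gram N w v e = (\<Sum>k<N. (w k * (v k \<bullet> e)) *\<^sub>R v k)"

lemma bounded_linear_weighted_gram: "bounded_linear (weighted_gram N w v)"
  unfolding weighted_gram_def[abs_def]
  by (intro bounded_linear_sum bounded_linear_compose[OF bounded_linear_scaleR_left]
      bounded_linear_compose[OF bounded_linear_mult_right] bounded_linear_inner_right)

lemma weighted_gram_inner: "weighted_gram N w v e \<bullet> h = (\<Sum>k<N. w k * (v k \<bullet> e) * (v k \<bullet> h))"
  by (simp add: weighted_gram_def inner_sum_left)

lemma weighted_gram_symmetric: "weighted_gram N w v e \<bullet> h = e \<bullet> weighted_gram N w v h"
  unfolding weighted_gram_inner inner_commute[of e] by (simp add: mult_ac)

lemma weighted_gram_quadratic: "weighted_gram N w v e \<bullet> e = (\<Sum>k<N. w k * (v k \<bullet> e)\<^sup>2)"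
  by (simp add: weighted_gram_inner power2_eq_square mult.assoc)

lemma weighted_gram_pos:
  assumes w: "\<And>k. k < N \<Longrightarrow> 0 < w k" and span: "span (v ` {..<N}) = UNIV" and "e \<noteq> 0"
  shows "0 < weighted_gram N w v e \<bullet> e"
proof -
  have "\<exists>k<N. v k \<bullet> e \<noteq> 0"
  proof (rule ccontr)
    assume "\<not> ?thesis"
    then have "orthogonal e e"
      using span by (intro orthogonal_to_span[of e "v ` {..<N}"]) (auto simp: orthogonal_def inner_commute)
    with \<open>e \<noteq> 0\<close> show False by (simp add: orthogonal_def)
  qed
  then obtain k where "k < N" "v k \<bullet> e \<noteq> 0" by blast
  then have "0 < w k * (v k \<bullet> e)\<^sup>2" using w by simp
  then show ?thesis
    unfolding weighted_gram_quadratic using \<open>k < N\<close> w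
    by (intro sum_pos2[where i = k]) (auto intro!: mult_nonneg_nonneg less_imp_le[OF w])
qed

section \<open>The three estimators\<close>

definition sample_gram :: "(real \<Rightarrow> 'a::real_inner) \<Rightarrow> nat \<Rightarrow> (nat \<Rightarrow> real) \<Rightarrow> real \<Rightarrow> 'a \<Rightarrow> 'a" where
  "sample_gram \<phi> N ts \<mu> = weighted_gram N (\<lambda>k. 1 / (1 + \<mu> * (norm (\<phi> (ts k)))\<^sup>2)) (\<lambda>k. \<phi> (ts k))"

lemma Bterm_eq_sample_gram: "Bterm \<phi> \<theta>s N ts \<mu> \<theta> = sample_gram \<phi> N ts \<mu> (\<theta> - \<theta>s)"
  by (simp add: Bterm_def sample_gram_def weighted_gram_def inner_diff_right)

lemma bounded_linear_sample_gram: "bounded_linear (sample_gram \<phi> N ts \<mu>)"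
  unfolding sample_gram_def by (rule bounded_linear_weighted_gram)

lemma sample_gram_nonneg: "0 \<le> \<mu> \<Longrightarrow> 0 \<le> sample_gram \<phi> N ts \<mu> e \<bullet> e"
  unfolding sample_gram_def weighted_gram_quadratic by (intro sum_nonneg) simp

lemma sample_gram_pos:
  assumes "0 \<le> \<mu>" and "span ((\<lambda>k. \<phi> (ts k)) ` {..<N}) = UNIV" and "e \<noteq> 0"
  shows "0 < sample_gram \<phi> N ts \<mu> e \<bullet> e"
  unfolding sample_gram_def using assms
  by (intro weighted_gram_pos) (simp_all add: add_pos_nonneg)

lemma Nrm_ge_1: "0 \<le> \<mu> \<Longrightarrow> 1 \<le> Nrm \<phi> \<mu> t"
  by (simp add: Nrm_def)

lemma sys3_dissipative:
  "lyapunov_deriv \<beta> \<gamma> (sample_gram \<phi> N ts \<mu>) (z - (\<theta>s, \<theta>s)) (sys3 \<phi> \<theta>s N ts \<beta> \<gamma> \<mu> s z)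
     \<le> - dissipation \<beta> \<gamma> (sample_gram \<phi> N ts \<mu>) (z - (\<theta>s, \<theta>s))"
proof -
  define e f where "e = fst z - \<theta>s" and "f = snd z - \<theta>s"
  have z: "z - (\<theta>s, \<theta>s) = (e, f)" by (simp add: e_def f_def prod_eq_iff)
  have "sys3 \<phi> \<theta>s N ts \<beta> \<gamma> \<mu> s z = (\<beta> *\<^sub>R (f - e), - \<gamma> *\<^sub>R (sample_gram \<phi> N ts \<mu> e + 0))"
    by (simp add: sys3_def Let_def Bterm_eq_sample_gram e_def f_def algebra_simps)
  then show ?thesis
    unfolding z sample_gram_def
    by (simp only:) (intro lyapunov_deriv_gradient_field_le bounded_linear.linear
        bounded_linear_weighted_gram weighted_gram_symmetric; simp)
qed

lemma sys2_dissipative: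
  assumes \<beta>: "0 \<le> \<beta>" and \<gamma>: "0 \<le> \<gamma>" and \<mu>: "0 \<le> \<mu>" and gain: "2 * \<gamma> \<le> \<beta> * \<mu>"
  shows "lyapunov_deriv \<beta> \<gamma> (sample_gram \<phi> N ts \<mu>) (z - (\<theta>s, \<theta>s)) (sys2 \<phi> \<theta>s N ts \<beta> \<gamma> \<mu> s z)
     \<le> - dissipation \<beta> \<gamma> (sample_gram \<phi> N ts \<mu>) (z - (\<theta>s, \<theta>s))"
proof -
  define e f where "e = fst z - \<theta>s" and "f = snd z - \<theta>s"
  define n where "n = Nrm \<phi> \<mu> s"
  have z: "z - (\<theta>s, \<theta>s) = (e, f)" by (simp add: e_def f_def prod_eq_iff)
  have n: "1 \<le> n" using Nrm_ge_1[OF \<mu>] by (simp add: n_def)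
  have "sys2 \<phi> \<theta>s N ts \<beta> \<gamma> \<mu> s z
      = (\<beta> *\<^sub>R (f - e), - \<gamma> *\<^sub>R (sample_gram \<phi> N ts \<mu> e + (\<phi> s \<bullet> e / n) *\<^sub>R \<phi> s))"
    by (simp add: sys2_def Let_def Bterm_eq_sample_gram e_def f_def n_def inner_diff_right
        divide_inverse algebra_simps)
  moreover have "2 * \<gamma> * (norm (\<phi> s))\<^sup>2 \<le> \<beta> * n"
  proof -
    have "2 * \<gamma> * (norm (\<phi> s))\<^sup>2 \<le> \<beta> * \<mu> * (norm (\<phi> s))\<^sup>2"
      using gain by (simp add: mult_right_mono)
    also have "\<dots> \<le> \<beta> * n" using \<beta> by (simp add: n_def Nrm_def power2_norm_eq_inner algebra_simps)
    finally show ?thesis .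
  qed
  ultimately show ?thesis
    unfolding z sample_gram_def
    by (simp only:) (intro lyapunov_deriv_gradient_field_le bounded_linear.linear
        bounded_linear_weighted_gram weighted_gram_symmetric rank_one_cross_term_le \<beta> \<gamma>; use n in simp)
qed

lemma sys1_eq_Nrm_scaleR_sys2:
  assumes "0 \<le> \<mu>"
  shows "sys1 \<phi> \<theta>s N ts \<beta> \<gamma> \<mu> s z = Nrm \<phi> \<mu> s *\<^sub>R sys2 \<phi> \<theta>s N ts \<beta> \<gamma> \<mu> s z"
proof -
  have "Nrm \<phi> \<mu> s \<noteq> 0" using Nrm_ge_1[OF assms, of \<phi> s] by linarith
  then have cancel: "Nrm \<phi> \<mu> s * (inverse (Nrm \<phi> \<mu> s) * x) = x"
    "Nrm \<phi> \<mu> s * (x * inverse (Nrm \<phi> \<mu> s)) = x" for x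
    by simp_all
  show ?thesis
    by (simp add: sys1_def sys2_def Let_def scaleR_add_right algebra_simps cancel)
qed

lemma sys1_dissipative:
  assumes \<beta>: "0 \<le> \<beta>" and \<gamma>: "0 \<le> \<gamma>" and \<mu>: "0 \<le> \<mu>" and gain: "2 * \<gamma> \<le> \<beta> * \<mu>"
  shows "lyapunov_deriv \<beta> \<gamma> (sample_gram \<phi> N ts \<mu>) (z - (\<theta>s, \<theta>s)) (sys1 \<phi> \<theta>s N ts \<beta> \<gamma> \<mu> s z)
     \<le> - dissipation \<beta> \<gamma> (sample_gram \<phi> N ts \<mu>) (z - (\<theta>s, \<theta>s))"
proof -
  let ?G = "sample_gram \<phi> N ts \<mu>" and ?z = "z - (\<theta>s, \<theta>s)"
  have lin: "linear ?G" by (rule bounded_linear.linear[OF bounded_linear_sample_gram])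
  have "lyapunov_deriv \<beta> \<gamma> ?G ?z (sys1 \<phi> \<theta>s N ts \<beta> \<gamma> \<mu> s z)
      = Nrm \<phi> \<mu> s * lyapunov_deriv \<beta> \<gamma> ?G ?z (sys2 \<phi> \<theta>s N ts \<beta> \<gamma> \<mu> s z)"
    by (simp add: sys1_eq_Nrm_scaleR_sys2[OF \<mu>] lyapunov_deriv_scaleR[OF lin])
  also have "\<dots> \<le> Nrm \<phi> \<mu> s * - dissipation \<beta> \<gamma> ?G ?z"
    using Nrm_ge_1[OF \<mu>, of \<phi> s] by (intro mult_left_mono sys2_dissipative[OF assms]) simp
  also have "\<dots> \<le> - dissipation \<beta> \<gamma> ?G ?z"
    using Nrm_ge_1[OF \<mu>, of \<phi> s] dissipation_nonneg[where A = ?G and z = ?z, OF \<beta> \<gamma> sample_gram_nonneg[OF \<mu>]]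
    by (simp add: mult_le_cancel_right1)
  finally show ?thesis .
qed

lemma piecewise_continuous_in_time_of_halfline:
  assumes pc: "piecewise_continuous_on_halfline \<phi>"
    and cont: "\<And>t y. continuous (at t within {0..}) \<phi> \<Longrightarrow> continuous (at t within {0..}) y \<Longrightarrow>
                 continuous (at t within {0..}) (\<lambda>s. F s (y s))"
  shows "piecewise_continuous_in_time F"
  unfolding piecewise_continuous_in_time_def
proof (intro allI impI)
  fix b :: real assume "0 \<le> b"
  then obtain S where "finite S" "\<forall>t\<in>{0..b} - S. continuous (at t within {0..}) \<phi>"
    using pc unfolding piecewise_continuous_on_halfline_def by blast
  then show "\<exists>S. finite S \<and> (\<forall>t\<in>{0..b} - S. \<forall>y. continuous (at t within {0..}) y \<longrightarrow>
               continuous (at t within {0..}) (\<lambda>s. F s (y s)))"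
    using cont by blast
qed

lemma piecewise_continuous_in_time_sys:
  assumes pc: "piecewise_continuous_on_halfline \<phi>" and \<mu>: "0 \<le> \<mu>"
  shows "piecewise_continuous_in_time (sys1 \<phi> \<theta>s N ts \<beta> \<gamma> \<mu>)"
    and "piecewise_continuous_in_time (sys2 \<phi> \<theta>s N ts \<beta> \<gamma> \<mu>)"
    and "piecewise_continuous_in_time (sys3 \<phi> \<theta>s N ts \<beta> \<gamma> \<mu>)"
  using \<mu> unfolding sys1_def sys2_def sys3_def Let_def Nrm_def Bterm_def
  by (auto intro!: piecewise_continuous_in_time_of_halfline[OF pc] continuous_intros add_pos_nonneg
      simp: add_nonneg_eq_0_iff)

theorem mainTheorem8:
  fixes \<phi> :: "real \<Rightarrow> real^'n" and \<theta>s :: "real^'n"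
    and N :: nat and ts :: "nat \<Rightarrow> real" and \<beta> \<gamma> \<mu> :: real
  assumes pc: "piecewise_continuous_on_halfline \<phi>"
    and bnd: "\<exists>M. \<forall>t\<ge>0. norm (\<phi> t) \<le> M"
    and ts_nonneg: "\<forall>k<N. ts k \<ge> 0"
    and rank: "dim ((\<lambda>k. \<phi> (ts k)) ` {..<N}) = CARD('n)"
  shows "(\<beta> > 0 \<and> \<gamma> > 0 \<and> \<mu> > 0 \<and> \<beta> \<ge> 2 * \<gamma> / \<mu> \<longrightarrow>
            UGES (sys1 \<phi> \<theta>s N ts \<beta> \<gamma> \<mu>) (\<theta>s, \<theta>s))
       \<and> (\<beta> > 0 \<and> \<gamma> > 0 \<and> \<mu> > 0 \<and> \<beta> \<ge> 2 * \<gamma> / \<mu> \<longrightarrow>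
            UGES (sys2 \<phi> \<theta>s N ts \<beta> \<gamma> \<mu>) (\<theta>s, \<theta>s))
       \<and> (\<beta> > 0 \<and> \<gamma> > 0 \<and> \<mu> \<ge> 0 \<longrightarrow>
            UGES (sys3 \<phi> \<theta>s N ts \<beta> \<gamma> \<mu>) (\<theta>s, \<theta>s))"
proof -
  let ?G = "sample_gram \<phi> N ts \<mu>"
  have span: "span ((\<lambda>k. \<phi> (ts k)) ` {..<N}) = UNIV"
    using rank dim_eq_full by (metis DIM_cart DIM_real mult_1_right)
  have UGES: "UGES F (\<theta>s, \<theta>s)"
    if "0 < \<beta>" "0 < \<gamma>" "0 \<le> \<mu>" "piecewise_continuous_in_time F"
      "\<And>s z. 0 \<le> s \<Longrightarrow>
         lyapunov_deriv \<beta> \<gamma> ?G (z - (\<theta>s, \<theta>s)) (F s z) \<le> - dissipation \<beta> \<gamma> ?G (z - (\<theta>s, \<theta>s))"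
    for F
    by (rule UGES_of_dissipation[OF that(4) bounded_linear_sample_gram
          sample_gram_pos[OF that(3) span] that(1,2) that(5)])
  have gain: "2 * \<gamma> \<le> \<beta> * \<mu>" if "0 < \<mu>" "2 * \<gamma> / \<mu> \<le> \<beta>"
    using that by (simp add: divide_le_eq mult.commute)
  show ?thesis
  proof (intro conjI impI)
    assume "0 < \<beta> \<and> 0 < \<gamma> \<and> 0 < \<mu> \<and> 2 * \<gamma> / \<mu> \<le> \<beta>"
    then show "UGES (sys1 \<phi> \<theta>s N ts \<beta> \<gamma> \<mu>) (\<theta>s, \<theta>s)"
      by (intro UGES piecewise_continuous_in_time_sys[OF pc] sys1_dissipative gain) auto
  next
    assume "0 < \<beta> \<and> 0 < \<gamma> \<and> 0 < \<mu> \<and> 2 * \<gamma> / \<mu> \<le> \<beta>"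
    then show "UGES (sys2 \<phi> \<theta>s N ts \<beta> \<gamma> \<mu>) (\<theta>s, \<theta>s)"
      by (intro UGES piecewise_continuous_in_time_sys[OF pc] sys2_dissipative gain) auto
  next
    assume "0 < \<beta> \<and> 0 < \<gamma> \<and> 0 \<le> \<mu>"
    then show "UGES (sys3 \<phi> \<theta>s N ts \<beta> \<gamma> \<mu>) (\<theta>s, \<theta>s)"
      by (intro UGES piecewise_continuous_in_time_sys[OF pc] sys3_dissipative) auto
  qed
qed

end
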